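(* Let $(A;R)\in\mathcal C$ and let $F_1,\dots,F_r$ ($r\ge1$) be distinct closed sets of $PG(A;R)$, with $U=\bigcup_{i=1}^rF_i$. Let $\rho(F_1,\dots,F_r)$ be the number of $s\in R$ with $s\subseteq U$ but $s\not\subseteq F_i$ for every $i$. Then $$-\Delta(F_1,\dots,F_r)=\delta(U)-d(U)+\rho(F_1,\dots,F_r).$$ Consequently $\Delta(F_1,\dots,F_r)\le0$, and $\Delta(F_1,\dots,F_r)=0$ if and only if $U\le A$ and every $s\in R$ with $s\subseteq U$ is contained in some $F_i$.
   Context: A set system is a pair $(A;R)$ where $R$ is a set of finite non-empty subsets of $A$; for $X\subseteq A$, $R[X]=\{s\in R: s\subseteq X\}$ and $\delta(X)=|X|-|R[X]|$. $\mathcal C$ is the class of finite set systems with $\delta(X)\ge0$ for all $X\subseteq A$. $X\le A$ means $\delta(X)\le\delta(X')$ for all $X\subseteq X'\subseteq A$. Define $d(X)=\min\{\delta(Y):X\subseteq Y\subseteq A\}$ and $\mathrm{cl}(X)=\{y: d(X\cup\{y\})=d(X)\}$; $PG(A;R)$ is the pregeometry $(A,\mathrm{cl})$ with dimension function $d$; closed sets are $F$ with $\mathrm{cl}(F)=F$. For a family $F_i$ ($i\in I=\{1,\dots,r\}$) of distinct closed sets, put $F_S=\bigcap_{i\in S}F_i$ for $\emptyset\neq S\subseteq I$, $F_\emptyset=\bigcup_iF_i$, and $\Delta(F_1,\dots,F_r)=\sum_{S\subseteq I}(-1)^{|S|}d(F_S)$. *)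

theory Defs
  imports Main
begin

definition set_system :: "'a set \<Rightarrow> 'a set set \<Rightarrow> bool" where
  "set_system A R \<longleftrightarrow> (\<forall>s\<in>R. finite s \<and> s \<noteq> {} \<and> s \<subseteq> A)"

definition Rof :: "'a set set \<Rightarrow> 'a set \<Rightarrow> 'a set set" where
  "Rof R X = {s \<in> R. s \<subseteq> X}"

definition delta :: "'a set set \<Rightarrow> 'a set \<Rightarrow> int" where
  "delta R X = int (card X) - int (card (Rof R X))"

definition inC :: "'a set \<Rightarrow> 'a set set \<Rightarrow> bool" where
  "inC A R \<longleftrightarrow> finite A \<and> set_system A R \<and> (\<forall>X. X \<subseteq> A \<longrightarrow> delta R X \<ge> 0)"

definition selfsuff :: "'a set \<Rightarrow> 'a set set \<Rightarrow> 'a set \<Rightarrow> bool" where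
  "selfsuff A R X \<longleftrightarrow> (\<forall>X'. X \<subseteq> X' \<and> X' \<subseteq> A \<longrightarrow> delta R X \<le> delta R X')"

definition dim :: "'a set \<Rightarrow> 'a set set \<Rightarrow> 'a set \<Rightarrow> int" where
  "dim A R X = Min {delta R Y | Y. X \<subseteq> Y \<and> Y \<subseteq> A}"

definition cl :: "'a set \<Rightarrow> 'a set set \<Rightarrow> 'a set \<Rightarrow> 'a set" where
  "cl A R X = {y \<in> A. dim A R (insert y X) = dim A R X}"

definition closed_set :: "'a set \<Rightarrow> 'a set set \<Rightarrow> 'a set \<Rightarrow> bool" where
  "closed_set A R F \<longleftrightarrow> F \<subseteq> A \<and> cl A R F = F"

definition FS :: "nat set \<Rightarrow> (nat \<Rightarrow> 'a set) \<Rightarrow> nat set \<Rightarrow> 'a set" where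
  "FS I F S = (if S = {} then (\<Union>i\<in>I. F i) else (\<Inter>i\<in>S. F i))"

definition Delta :: "'a set \<Rightarrow> 'a set set \<Rightarrow> nat \<Rightarrow> (nat \<Rightarrow> 'a set) \<Rightarrow> int" where
  "Delta A R r F = (\<Sum>S\<in>Pow {1..r}. (-1) ^ card S * dim A R (FS {1..r} F S))"

definition rho :: "'a set set \<Rightarrow> nat \<Rightarrow> (nat \<Rightarrow> 'a set) \<Rightarrow> nat" where
  "rho R r F = card {s \<in> R. s \<subseteq> (\<Union>i\<in>{1..r}. F i) \<and> (\<forall>i\<in>{1..r}. \<not> s \<subseteq> F i)}"

end

theory Submission
  imports Defs
begin

(* For a self-sufficient set X (X \<le> A) the dimension d(X) equals \<delta>(X), and
   self-sufficiency is preserved under intersection because \<delta> is submodular.  Closed sets are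
   self-sufficient, so for every nonempty S the set F_S is self-sufficient and d(F_S) = \<delta>(F_S).
   Splitting off the term S = {} of \<Delta>, the remaining alternating sum of \<delta>(F_S) is, by
   inclusion-exclusion applied separately to points and to relations,
   |R[F_1] \<union> ... \<union> R[F_r]| - |U|.  Since \<rho> = |R[U]| - |R[F_1] \<union> ... \<union> R[F_r]|, this gives
   -\<Delta> = \<delta>(U) - d(U) + \<rho>.  Both summands \<delta>(U) - d(U) and \<rho> are nonnegative, which yields
   \<Delta> \<le> 0 and the characterisation of \<Delta> = 0. *)

lemma inC_finite_R:
  assumes "inC A R"
  shows "finite R"
proof -
  have "R \<subseteq> Pow A" using assms unfolding inC_def set_system_def by blast
  moreover have "finite A" using assms unfolding inC_def by blast
  ultimately show ?thesis by (meson finite_Pow_iff finite_subset)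
qed

lemma dim_le_delta:
  assumes "finite A" "X \<subseteq> Y" "Y \<subseteq> A"
  shows "dim A R X \<le> delta R Y"
proof -
  have "finite {delta R Y | Y. X \<subseteq> Y \<and> Y \<subseteq> A}"
    using assms(1) by (simp add: setcompr_eq_image)
  then show ?thesis unfolding dim_def using assms by (intro Min_le) auto
qed

lemma dim_attained:
  assumes "finite A" "X \<subseteq> A"
  obtains Y where "X \<subseteq> Y" "Y \<subseteq> A" "dim A R X = delta R Y"
proof -
  let ?D = "{delta R Y | Y. X \<subseteq> Y \<and> Y \<subseteq> A}"
  have "finite ?D" using assms(1) by (simp add: setcompr_eq_image)
  moreover have "?D \<noteq> {}" using assms(2) by auto
  ultimately have "Min ?D \<in> ?D" by (rule Min_in)
  then show ?thesis using that unfolding dim_def by blast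
qed

lemma dim_mono:
  assumes "finite A" "X \<subseteq> X'" "X' \<subseteq> A"
  shows "dim A R X \<le> dim A R X'"
proof -
  obtain Y where "X' \<subseteq> Y" "Y \<subseteq> A" "dim A R X' = delta R Y"
    using dim_attained[OF assms(1,3)] .
  then show ?thesis using dim_le_delta[OF assms(1), of X Y R] assms(2) by simp
qed

lemma selfsuff_iff_dim_eq_delta:
  assumes "finite A" "X \<subseteq> A"
  shows "selfsuff A R X \<longleftrightarrow> dim A R X = delta R X"
proof
  assume ss: "selfsuff A R X"
  obtain Y where Y: "X \<subseteq> Y" "Y \<subseteq> A" "dim A R X = delta R Y"
    using dim_attained[OF assms] .
  have "delta R X \<le> delta R Y" using ss Y unfolding selfsuff_def by blast
  then show "dim A R X = delta R X"
    using dim_le_delta[OF assms(1) order_refl assms(2), of R] Y(3) by linarith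
next
  assume "dim A R X = delta R X"
  then show "selfsuff A R X"
    unfolding selfsuff_def using dim_le_delta[OF assms(1), of X _ R] by fastforce
qed

text \<open>A closed set F is self-sufficient: every point of a superset Y realising d(F) does not
  raise the dimension of F, hence lies in cl(F) = F, so Y = F.\<close>
lemma closed_imp_selfsuff:
  assumes "finite A" "closed_set A R F"
  shows "selfsuff A R F"
proof -
  have FA: "F \<subseteq> A" and clF: "cl A R F = F" using assms(2) unfolding closed_set_def by auto
  obtain Y where Y: "F \<subseteq> Y" "Y \<subseteq> A" "dim A R F = delta R Y"
    using dim_attained[OF assms(1) FA] .
  have "Y \<subseteq> F"
  proof
    fix y assume y: "y \<in> Y"
    have "dim A R (insert y F) \<le> delta R Y"
      using Y y by (intro dim_le_delta[OF assms(1)]) auto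
    moreover have "dim A R F \<le> dim A R (insert y F)"
      using Y y by (intro dim_mono[OF assms(1)]) auto
    ultimately have "y \<in> cl A R F" using Y y unfolding cl_def by auto
    then show "y \<in> F" using clF by simp
  qed
  then have "dim A R F = delta R F" using Y by simp
  then show ?thesis using selfsuff_iff_dim_eq_delta[OF assms(1) FA] by simp
qed

text \<open>The predimension \<delta> is submodular: points count modularly, while every relation
  contained in X or in Y is contained in X \<union> Y.\<close>
lemma delta_submodular:
  assumes "finite X" "finite Y" "finite R"
  shows "delta R (X \<union> Y) + delta R (X \<inter> Y) \<le> delta R X + delta R Y"
proof -
  have fin: "finite (Rof R Z)" for Z using assms(3) unfolding Rof_def by auto
  have points: "card X + card Y = card (X \<union> Y) + card (X \<inter> Y)"
    using card_Un_Int assms(1,2) by blast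
  have "card (Rof R X) + card (Rof R Y) = card (Rof R X \<union> Rof R Y) + card (Rof R X \<inter> Rof R Y)"
    using card_Un_Int fin by blast
  also have "card (Rof R X \<union> Rof R Y) \<le> card (Rof R (X \<union> Y))"
    by (rule card_mono[OF fin]) (auto simp: Rof_def)
  also have "Rof R X \<inter> Rof R Y = Rof R (X \<inter> Y)" by (auto simp: Rof_def)
  finally have "card (Rof R X) + card (Rof R Y) \<le> card (Rof R (X \<union> Y)) + card (Rof R (X \<inter> Y))"
    by simp
  then show ?thesis using points unfolding delta_def by linarith
qed

lemma selfsuff_Int:
  assumes "finite A" "finite R" "X \<subseteq> A" "Y \<subseteq> A" "selfsuff A R X" "selfsuff A R Y"
  shows "selfsuff A R (X \<inter> Y)"
  unfolding selfsuff_def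
proof (intro allI impI)
  fix Z assume "X \<inter> Y \<subseteq> Z \<and> Z \<subseteq> A"
  then have XYZ: "X \<inter> Y \<subseteq> Z" and ZA: "Z \<subseteq> A" by simp_all
  have fin: "finite W" if "W \<subseteq> A" for W using assms(1) that finite_subset by blast
  have "delta R (Y \<union> Z) + delta R (Y \<inter> Z) \<le> delta R Y + delta R Z"
    using assms(2,4) ZA fin by (intro delta_submodular) auto
  moreover have "delta R (X \<union> (Y \<inter> Z)) + delta R (X \<inter> Y) \<le> delta R X + delta R (Y \<inter> Z)"
  proof -
    have "X \<inter> (Y \<inter> Z) = X \<inter> Y" using XYZ by blast
    then show ?thesis
      using delta_submodular[of X "Y \<inter> Z" R] assms(2,3) ZA fin by simp
  qed
  moreover have "delta R Y \<le> delta R (Y \<union> Z)"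
    using assms(4,6) ZA unfolding selfsuff_def by blast
  moreover have "delta R X \<le> delta R (X \<union> (Y \<inter> Z))"
    using assms(3,5) ZA unfolding selfsuff_def by blast
  ultimately show "delta R (X \<inter> Y) \<le> delta R Z" by linarith
qed

lemma selfsuff_Inter:
  assumes "finite A" "finite R" "finite S" "S \<noteq> {}"
    and "\<And>i. i \<in> S \<Longrightarrow> F i \<subseteq> A \<and> selfsuff A R (F i)"
  shows "selfsuff A R (\<Inter>(F ` S))"
proof -
  have "selfsuff A R (\<Inter>(F ` S)) \<and> \<Inter>(F ` S) \<subseteq> A"
    using assms(3,4,5)
  proof (induction S rule: finite_ne_induct)
    case (singleton i) then show ?case by simp
  next
    case (insert i S)
    then show ?case using selfsuff_Int[OF assms(1,2), of "F i" "\<Inter>(F ` S)"] by auto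
  qed
  then show ?thesis ..
qed

lemma card_UN_incl_excl:
  assumes "finite I" "finite K" "\<And>i. i \<in> I \<Longrightarrow> G i \<subseteq> K"
  shows "int (card (\<Union>(G ` I)))
           = (\<Sum>B | B \<subseteq> I \<and> B \<noteq> {}. (-1) ^ (card B + 1) * int (card (\<Inter>(G ` B))))"
proof -
  let ?f = "\<lambda>X. int (card (X \<inter> K))"
  have add: "?f (X \<union> Y) = ?f X + ?f Y" if "disjnt X Y" for X Y
  proof -
    have "(X \<union> Y) \<inter> K = (X \<inter> K) \<union> (Y \<inter> K)" by blast
    moreover have "card ((X \<inter> K) \<union> (Y \<inter> K)) = card (X \<inter> K) + card (Y \<inter> K)"
      using assms(2) that by (intro card_Un_disjoint) (auto simp: disjnt_def)
    ultimately show ?thesis by simp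
  qed
  have "?f (\<Union>(G ` I)) = (\<Sum>B | B \<subseteq> I \<and> B \<noteq> {}. (-1) ^ (card B + 1) * ?f (\<Inter>(G ` B)))"
    using Incl_Excl_UN[of ?f I G] add assms(1) by blast
  also have "\<dots> = (\<Sum>B | B \<subseteq> I \<and> B \<noteq> {}. (-1) ^ (card B + 1) * int (card (\<Inter>(G ` B))))"
  proof (rule sum.cong)
    fix B assume "B \<in> {B. B \<subseteq> I \<and> B \<noteq> {}}"
    then have "\<Inter>(G ` B) \<inter> K = \<Inter>(G ` B)" using assms(3) by blast
    then show "(-1) ^ (card B + 1) * ?f (\<Inter>(G ` B)) = (-1) ^ (card B + 1) * int (card (\<Inter>(G ` B)))"
      by simp
  qed simp
  finally show ?thesis using assms(3) by (simp add: Int_absorb2 UN_least)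
qed

text \<open>Applied to points and to relations separately, inclusion-exclusion evaluates the
  alternating sum of predimensions of the intersections of a finite family.\<close>
lemma delta_incl_excl:
  assumes "finite A" "finite R" "finite I" "\<And>i. i \<in> I \<Longrightarrow> X i \<subseteq> A"
  shows "(\<Sum>B | B \<subseteq> I \<and> B \<noteq> {}. (-1) ^ (card B + 1) * delta R (\<Inter>(X ` B)))
           = int (card (\<Union>(X ` I))) - int (card (\<Union>i\<in>I. Rof R (X i)))"
proof -
  let ?P = "{B. B \<subseteq> I \<and> B \<noteq> {}}"
  have Rof_Inter: "Rof R (\<Inter>(X ` B)) = \<Inter>((\<lambda>i. Rof R (X i)) ` B)" if "B \<in> ?P" for B
    using that unfolding Rof_def by auto
  have points: "int (card (\<Union>(X ` I)))
      = (\<Sum>B\<in>?P. (-1) ^ (card B + 1) * int (card (\<Inter>(X ` B))))"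
    using card_UN_incl_excl[OF assms(3,1) assms(4)] by simp
  have rels: "int (card (\<Union>i\<in>I. Rof R (X i)))
      = (\<Sum>B\<in>?P. (-1) ^ (card B + 1) * int (card (\<Inter>((\<lambda>i. Rof R (X i)) ` B))))"
    using card_UN_incl_excl[OF assms(3,2), of "\<lambda>i. Rof R (X i)"] by (simp add: Rof_def)
  show ?thesis
    unfolding points rels sum_subtractf[symmetric] delta_def
    by (rule sum.cong) (simp_all add: Rof_Inter algebra_simps)
qed

lemma Delta_split:
  "Delta A R r F = dim A R (\<Union>(F ` {1..r}))
     - (\<Sum>S | S \<subseteq> {1..r} \<and> S \<noteq> {}. (-1) ^ (card S + 1) * dim A R (\<Inter>(F ` S)))"
proof -
  let ?P = "{S. S \<subseteq> {1..r} \<and> S \<noteq> {}}"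
  have "Pow {1..r} = insert {} ?P" by blast
  moreover have "finite ?P" by simp
  ultimately have "Delta A R r F = dim A R (\<Union>(F ` {1..r}))
      + (\<Sum>S\<in>?P. (-1) ^ card S * dim A R (FS {1..r} F S))"
    unfolding Delta_def by (simp add: FS_def)
  also have "(\<Sum>S\<in>?P. (-1) ^ card S * dim A R (FS {1..r} F S))
      = - (\<Sum>S\<in>?P. (-1) ^ (card S + 1) * dim A R (\<Inter>(F ` S)))"
    unfolding sum_negf[symmetric] by (rule sum.cong) (simp_all add: FS_def)
  finally show ?thesis by simp
qed

lemma rho_eq:
  assumes "finite R"
  shows "int (rho R r F)
           = int (card (Rof R (\<Union>(F ` {1..r})))) - int (card (\<Union>i\<in>{1..r}. Rof R (F i)))"
proof -
  let ?U = "\<Union>(F ` {1..r})"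
  have sub: "(\<Union>i\<in>{1..r}. Rof R (F i)) \<subseteq> Rof R ?U" unfolding Rof_def by blast
  have fin: "finite (Rof R ?U)" using assms unfolding Rof_def by simp
  have "{s \<in> R. s \<subseteq> ?U \<and> (\<forall>i\<in>{1..r}. \<not> s \<subseteq> F i)} = Rof R ?U - (\<Union>i\<in>{1..r}. Rof R (F i))"
    unfolding Rof_def by blast
  then show ?thesis
    unfolding rho_def using card_Diff_subset[OF finite_subset[OF sub fin] sub] card_mono[OF fin sub]
    by simp
qed

lemma neg_Delta_selfsuff:
  assumes "finite A" "finite R"
    and "\<And>i. i \<in> {1..r} \<Longrightarrow> F i \<subseteq> A \<and> selfsuff A R (F i)"
  defines "U \<equiv> \<Union>(F ` {1..r})"
  shows "- Delta A R r F = delta R U - dim A R U + int (rho R r F)"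
proof -
  have dim_FS: "dim A R (\<Inter>(F ` S)) = delta R (\<Inter>(F ` S))"
    if "S \<subseteq> {1..r}" "S \<noteq> {}" for S
  proof -
    have "finite S" using that(1) finite_subset by blast
    then have "selfsuff A R (\<Inter>(F ` S))"
      using selfsuff_Inter[OF assms(1,2) _ that(2)] assms(3) that(1) by blast
    moreover have "\<Inter>(F ` S) \<subseteq> A" using assms(3) that by blast
    ultimately show ?thesis using selfsuff_iff_dim_eq_delta[OF assms(1)] by blast
  qed
  have "(\<Sum>S | S \<subseteq> {1..r} \<and> S \<noteq> {}. (-1) ^ (card S + 1) * dim A R (\<Inter>(F ` S)))
      = (\<Sum>S | S \<subseteq> {1..r} \<and> S \<noteq> {}. (-1) ^ (card S + 1) * delta R (\<Inter>(F ` S)))"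
    using dim_FS by (intro sum.cong) auto
  then have "Delta A R r F = dim A R U
      - (\<Sum>S | S \<subseteq> {1..r} \<and> S \<noteq> {}. (-1) ^ (card S + 1) * delta R (\<Inter>(F ` S)))"
    unfolding Delta_split U_def by simp
  also have "\<dots> = dim A R U - (int (card U) - int (card (\<Union>i\<in>{1..r}. Rof R (F i))))"
    unfolding U_def using delta_incl_excl[OF assms(1,2), of "{1..r}" F] assms(3) by simp
  finally show ?thesis
    unfolding rho_eq[OF assms(2)] delta_def U_def by simp
qed

theorem mainTheorem7:
  fixes A :: "'a set" and R :: "'a set set" and r :: nat and F :: "nat \<Rightarrow> 'a set"
  assumes "inC A R"
    and "r \<ge> 1"
    and "\<forall>i\<in>{1..r}. closed_set A R (F i)"
    and "inj_on F {1..r}"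
  defines "U \<equiv> \<Union>i\<in>{1..r}. F i"
  shows "- Delta A R r F = delta R U - dim A R U + int (rho R r F)
     \<and> Delta A R r F \<le> 0
     \<and> (Delta A R r F = 0 \<longleftrightarrow>
          (selfsuff A R U \<and> (\<forall>s\<in>R. s \<subseteq> U \<longrightarrow> (\<exists>i\<in>{1..r}. s \<subseteq> F i))))"
proof -
  have fA: "finite A" using assms(1) unfolding inC_def by blast
  have fR: "finite R" using inC_finite_R[OF assms(1)] .
  have Fi: "F i \<subseteq> A \<and> selfsuff A R (F i)" if "i \<in> {1..r}" for i
    using assms(3) closed_imp_selfsuff[OF fA] that unfolding closed_set_def by blast
  have UA: "U \<subseteq> A" using Fi unfolding U_def by blast
  have formula: "- Delta A R r F = delta R U - dim A R U + int (rho R r F)"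
    using neg_Delta_selfsuff[of A R r F] fA fR Fi unfolding U_def by blast
  have dim_U: "dim A R U \<le> delta R U" using dim_le_delta[OF fA order_refl UA] .
  have rho_0: "rho R r F = 0 \<longleftrightarrow> (\<forall>s\<in>R. s \<subseteq> U \<longrightarrow> (\<exists>i\<in>{1..r}. s \<subseteq> F i))"
    using fR unfolding rho_def U_def by auto
  show ?thesis
    using formula dim_U rho_0 selfsuff_iff_dim_eq_delta[OF fA UA, of R] by linarith
qed

end
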